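(* If $H$ is a $2$-regular uniform hypergraph, then the Graver basis of $I_H$ is the unique minimal generating set of $I_H$.
   Context: A hypergraph $H$ has vertex set $V=\{1,\dots,n\}$ and a set $E(H)$ of edges, each a nonempty subset of $V$ (no repeated edges). It is uniform if all edges have the same size and $2$-regular if every vertex lies in exactly two edges. For a field $K$, the toric ideal $I_H$ is the kernel of $\phi_H: K[t_e : e\in E(H)]\to K[x_1,\dots,x_n]$, $t_e\mapsto\prod_{j\in e}x_j$. The Graver basis of $I_H$ is the set of primitive binomials of $I_H$, where a binomial $u-v\in I_H$ ($u,v$ monomials) is primitive if there is no other binomial $u'-v'\in I_H$ with $u'\mid u$ and $v'\mid v$. "Unique minimal generating set" means the Graver basis generates $I_H$ minimally and every minimal binomial generating set of $I_H$ coincides with it up to the signs of its elements. *)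

theory Defs
  imports "HOL-Library.Poly_Mapping"
begin

definition hypergraph :: "nat \<Rightarrow> nat set set \<Rightarrow> bool" where
  "hypergraph n E \<longleftrightarrow> (\<forall>e\<in>E. e \<noteq> {} \<and> e \<subseteq> {1..n})"

definition uniform_hg :: "nat set set \<Rightarrow> bool" where
  "uniform_hg E \<longleftrightarrow> (\<exists>d. \<forall>e\<in>E. card e = d)"

definition two_regular :: "nat \<Rightarrow> nat set set \<Rightarrow> bool" where
  "two_regular n E \<longleftrightarrow> (\<forall>v\<in>{1..n}. card {e\<in>E. v \<in> e} = 2)"

text \<open>The ring K[t_e : e in E] is the set of polynomials whose monomials only
  involve variables t_e with e in E.\<close>

type_synonym 'k tpoly = "(nat set \<Rightarrow>\<^sub>0 nat) \<Rightarrow>\<^sub>0 'k"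
type_synonym 'k xpoly = "(nat \<Rightarrow>\<^sub>0 nat) \<Rightarrow>\<^sub>0 'k"

definition poly_ring_E :: "nat set set \<Rightarrow> ('k::field) tpoly set" where
  "poly_ring_E E = {p. \<forall>m\<in>Poly_Mapping.keys p. Poly_Mapping.keys m \<subseteq> E}"

text \<open>Image of the monomial prod t_e^(m e) under t_e |-> prod_{j in e} x_j.\<close>
definition xmon :: "(nat set \<Rightarrow>\<^sub>0 nat) \<Rightarrow> (nat \<Rightarrow>\<^sub>0 nat)" where
  "xmon m = (\<Sum>e\<in>Poly_Mapping.keys m. \<Sum>j\<in>e. Poly_Mapping.single j (Poly_Mapping.lookup m e))"

definition phi_H :: "('k::field) tpoly \<Rightarrow> 'k xpoly" where
  "phi_H p = (\<Sum>m\<in>Poly_Mapping.keys p. Poly_Mapping.single (xmon m) (Poly_Mapping.lookup p m))"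

definition toric_ideal :: "nat set set \<Rightarrow> ('k::field) tpoly set" where
  "toric_ideal E = {p \<in> poly_ring_E E. phi_H p = 0}"

definition ideal_gen :: "nat set set \<Rightarrow> ('k::field) tpoly set \<Rightarrow> 'k tpoly set" where
  "ideal_gen E S = {(\<Sum>g\<in>F. c g * g) | F c. finite F \<and> F \<subseteq> S \<and> (\<forall>g\<in>F. c g \<in> poly_ring_E E)}"

definition binom :: "(nat set \<Rightarrow>\<^sub>0 nat) \<Rightarrow> (nat set \<Rightarrow>\<^sub>0 nat) \<Rightarrow> ('k::field) tpoly" where
  "binom u v = Poly_Mapping.single u 1 - Poly_Mapping.single v 1"

definition is_binomial :: "('k::field) tpoly \<Rightarrow> bool" where
  "is_binomial p \<longleftrightarrow> (\<exists>u v. p = binom u v)"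

definition mdvd :: "(nat set \<Rightarrow>\<^sub>0 nat) \<Rightarrow> (nat set \<Rightarrow>\<^sub>0 nat) \<Rightarrow> bool" where
  "mdvd u' u \<longleftrightarrow> (\<forall>e. Poly_Mapping.lookup u' e \<le> Poly_Mapping.lookup u e)"

definition primitive :: "('k::field) itself \<Rightarrow> nat set set \<Rightarrow> (nat set \<Rightarrow>\<^sub>0 nat) \<Rightarrow> (nat set \<Rightarrow>\<^sub>0 nat) \<Rightarrow> bool" where
  "primitive _ E u v \<longleftrightarrow> u \<noteq> v \<and> (binom u v :: 'k tpoly) \<in> toric_ideal E \<and>
     \<not> (\<exists>u' v'. u' \<noteq> v' \<and> (u', v') \<noteq> (u, v) \<and> (binom u' v' :: 'k tpoly) \<in> toric_ideal E
          \<and> mdvd u' u \<and> mdvd v' v)"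

definition graver_basis :: "nat set set \<Rightarrow> ('k::field) tpoly set" where
  "graver_basis E = {binom u v | u v. primitive TYPE('k) E u v}"

definition minimal_gen_set :: "nat set set \<Rightarrow> ('k::field) tpoly set \<Rightarrow> bool" where
  "minimal_gen_set E B \<longleftrightarrow> B \<subseteq> toric_ideal E \<and> ideal_gen E B = toric_ideal E \<and>
     (\<forall>g\<in>B. ideal_gen E (B - {g}) \<noteq> toric_ideal E)"

text \<open>The Graver basis is the unique minimal generating set: choosing one sign
  from each pair +-g of Graver elements gives a minimal generating set, and every
  minimal binomial generating set coincides with the Graver basis up to signs.\<close>
definition unique_minimal_gen_set :: "nat set set \<Rightarrow> ('k::field) tpoly set \<Rightarrow> bool" where
  "unique_minimal_gen_set E G \<longleftrightarrow>
     ideal_gen E G = toric_ideal E \<and>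
     (\<forall>S. S \<union> uminus ` S = G \<union> uminus ` G \<and> (\<forall>g\<in>S. - g \<notin> S) \<longrightarrow> minimal_gen_set E S) \<and>
     (\<forall>B. (\<forall>b\<in>B. is_binomial b) \<and> minimal_gen_set E B \<longrightarrow>
          B \<union> uminus ` B = G \<union> uminus ` G)"

end

theory Submission
  imports Defs
begin

text \<open>
  In a 2-regular hypergraph every edge e meets some other edge f in a vertex j, and the exponent
  of x_j in the image of t^m is m_e + m_f. For a primitive binomial t^a - t^b the exponent vectors
  a and b have disjoint supports; comparing them at the shared vertices shows that they are
  squarefree and that every monomial t^m of the same degree satisfies m <= a + b, so primitivity
  leaves only m = a or m = b. A primitive binomial with the two-element fiber {a, b} cannot be
  written as a combination of other binomials of I_H, because no such binomial, multiplied by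
  any polynomial, produces the monomial t^a. Since the Graver basis generates I_H, it is then
  the unique minimal generating set.
\<close>

type_synonym tmono = "nat set \<Rightarrow>\<^sub>0 nat"

lemma poly_mapping_sum_single:
  "p = (\<Sum>m\<in>Poly_Mapping.keys p. Poly_Mapping.single m (Poly_Mapping.lookup p m))"
  by (rule poly_mapping_eqI)
     (simp add: lookup_sum lookup_single when_def in_keys_iff sum.delta[OF finite_keys])

lemma keys_mult_single:
  "Poly_Mapping.keys (c * Poly_Mapping.single w (1::'k::field)) \<subseteq> (\<lambda>m. m + w) ` Poly_Mapping.keys c"
  using keys_mult[of c "Poly_Mapping.single w (1::'k)"] by auto

lemma mdvd_keys: "mdvd a b \<Longrightarrow> Poly_Mapping.keys a \<subseteq> Poly_Mapping.keys b"
  unfolding mdvd_def by (metis in_keys_iff le_zero_eq subsetI)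

lemma mdvd_add_right: "mdvd a (a + b)"
  by (simp add: mdvd_def lookup_add)

lemma mdvd_diff_left: "mdvd (a - b) a"
  by (simp add: mdvd_def lookup_minus)

lemma diff_add_mdvd: "mdvd b a \<Longrightarrow> a - b + b = a"
  unfolding mdvd_def by (auto intro!: poly_mapping_eqI simp: lookup_add lookup_minus)

definition mgcd :: "tmono \<Rightarrow> tmono \<Rightarrow> tmono" where
  "mgcd a b = a - (a - b)"

lemma lookup_mgcd: "Poly_Mapping.lookup (mgcd a b) e = min (Poly_Mapping.lookup a e) (Poly_Mapping.lookup b e)"
  by (simp add: mgcd_def lookup_minus)

lemma mgcd_mdvd: "mdvd (mgcd a b) a" "mdvd (mgcd a b) b"
  by (simp_all add: mdvd_def lookup_mgcd)

definition mrad :: "tmono \<Rightarrow> tmono" where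
  "mrad a = Poly_Mapping.map (min 1) a"

lemma lookup_mrad: "Poly_Mapping.lookup (mrad a) e = min 1 (Poly_Mapping.lookup a e)"
  by (simp add: mrad_def map.rep_eq when_def)

lemma mrad_mdvd: "mdvd (mrad a) a"
  by (simp add: mdvd_def lookup_mrad)

definition mdeg :: "tmono \<Rightarrow> nat" where
  "mdeg x = sum (Poly_Mapping.lookup x) (Poly_Mapping.keys x)"

lemma mdeg_eq_sum:
  assumes "Poly_Mapping.keys x \<subseteq> Poly_Mapping.keys y"
  shows "mdeg x = sum (Poly_Mapping.lookup x) (Poly_Mapping.keys y)"
  unfolding mdeg_def using assms
  by (intro sum.mono_neutral_left) (simp_all add: not_in_keys_iff_lookup_eq_zero)

lemma mdeg_mono: "mdvd a b \<Longrightarrow> mdeg a \<le> mdeg b"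
  unfolding mdeg_eq_sum[OF mdvd_keys] by (auto simp: mdeg_def mdvd_def intro: sum_mono)

lemma mdeg_less:
  assumes "mdvd a b" "a \<noteq> b"
  shows "mdeg a < mdeg b"
proof -
  have le: "\<forall>e\<in>Poly_Mapping.keys b. Poly_Mapping.lookup a e \<le> Poly_Mapping.lookup b e"
    using assms(1) by (simp add: mdvd_def)
  have "\<exists>e. Poly_Mapping.lookup a e \<noteq> Poly_Mapping.lookup b e"
    using assms(2) by (simp add: poly_mapping_eq_iff fun_eq_iff)
  then obtain e where "Poly_Mapping.lookup a e < Poly_Mapping.lookup b e"
    using assms(1) unfolding mdvd_def using le_neq_implies_less by blast
  then have "\<exists>e\<in>Poly_Mapping.keys b. Poly_Mapping.lookup a e < Poly_Mapping.lookup b e"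
    by (intro bexI[of _ e]) (simp_all add: in_keys_iff)
  then have "sum (Poly_Mapping.lookup a) (Poly_Mapping.keys b) < mdeg b"
    unfolding mdeg_def by (rule sum_strict_mono_ex1[OF finite_keys le])
  then show ?thesis
    by (simp add: mdeg_eq_sum[OF mdvd_keys[OF assms(1)]])
qed

lemma mdeg_add_less:
  assumes "mdvd a' a" "mdvd b' b" "(a', b') \<noteq> (a, b)"
  shows "mdeg a' + mdeg b' < mdeg a + mdeg b"
  using assms mdeg_less[of a' a] mdeg_less[of b' b] mdeg_mono[of a' a] mdeg_mono[of b' b]
  by fastforce

lemma xmon_superset:
  assumes "finite S" "Poly_Mapping.keys m \<subseteq> S"
  shows "xmon m = (\<Sum>e\<in>S. \<Sum>j\<in>e. Poly_Mapping.single j (Poly_Mapping.lookup m e))"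
  unfolding xmon_def using assms
  by (intro sum.mono_neutral_left) (simp_all add: not_in_keys_iff_lookup_eq_zero)

lemma xmon_add: "xmon (a + b) = xmon a + xmon b"
proof -
  let ?S = "Poly_Mapping.keys a \<union> Poly_Mapping.keys b"
  have "finite ?S" "Poly_Mapping.keys (a + b) \<subseteq> ?S"
    using keys_add[of a b] by auto
  then show ?thesis
    by (simp add: xmon_superset[of ?S] lookup_add single_add sum.distrib)
qed

lemma lookup_xmon:
  assumes "finite S" "Poly_Mapping.keys m \<subseteq> S" "\<forall>e\<in>S. finite e"
  shows "Poly_Mapping.lookup (xmon m) j = (\<Sum>e\<in>{e\<in>S. j \<in> e}. Poly_Mapping.lookup m e)"
proof -
  have "(\<Sum>i\<in>e. Poly_Mapping.lookup (Poly_Mapping.single i (Poly_Mapping.lookup m e)) j)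
      = (if j \<in> e then Poly_Mapping.lookup m e else 0)" if "finite e" for e
    using that by (simp add: lookup_single when_def)
  then have "Poly_Mapping.lookup (xmon m) j = (\<Sum>e\<in>S. if j \<in> e then Poly_Mapping.lookup m e else 0)"
    unfolding xmon_superset[OF assms(1,2)] lookup_sum using assms(3) by (intro sum.cong) auto
  also have "\<dots> = (\<Sum>e\<in>{e\<in>S. j \<in> e}. Poly_Mapping.lookup m e)"
    by (rule sum.inter_filter[OF assms(1), symmetric])
  finally show ?thesis .
qed

lemma poly_ring_E_zero: "0 \<in> poly_ring_E E"
  by (simp add: poly_ring_E_def)

lemma poly_ring_E_add: "p \<in> poly_ring_E E \<Longrightarrow> q \<in> poly_ring_E E \<Longrightarrow> p + q \<in> poly_ring_E E"
  unfolding poly_ring_E_def using keys_add[of p q] by fastforce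

lemma poly_ring_E_uminus: "p \<in> poly_ring_E E \<Longrightarrow> - p \<in> poly_ring_E E"
  unfolding poly_ring_E_def by simp

lemma poly_ring_E_diff: "p \<in> poly_ring_E E \<Longrightarrow> q \<in> poly_ring_E E \<Longrightarrow> p - q \<in> poly_ring_E E"
  using poly_ring_E_add[of p E "- q"] poly_ring_E_uminus[of q E] by simp

lemma poly_ring_E_mult:
  assumes "p \<in> poly_ring_E E" "q \<in> poly_ring_E E"
  shows "p * q \<in> poly_ring_E E"
  unfolding poly_ring_E_def
proof safe
  fix m e assume "m \<in> Poly_Mapping.keys (p * q)" "e \<in> Poly_Mapping.keys m"
  then obtain a b where "m = a + b" "a \<in> Poly_Mapping.keys p" "b \<in> Poly_Mapping.keys q"
    "e \<in> Poly_Mapping.keys (a + b)"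
    using keys_mult by blast
  with assms show "e \<in> E"
    unfolding poly_ring_E_def using keys_add[of a b] by blast
qed

lemma poly_ring_E_single: "Poly_Mapping.keys m \<subseteq> E \<Longrightarrow> Poly_Mapping.single m c \<in> poly_ring_E E"
  unfolding poly_ring_E_def by simp

lemma ideal_gen_zero: "0 \<in> ideal_gen E X"
  unfolding ideal_gen_def by (intro CollectI exI[of _ "{}"]) simp

lemma ideal_gen_base: "g \<in> X \<Longrightarrow> g \<in> ideal_gen E X"
  unfolding ideal_gen_def
  by (intro CollectI exI[of _ "{g}"] exI[of _ "\<lambda>_. 1"]) (simp add: poly_ring_E_def)

lemma ideal_gen_add:
  assumes "p \<in> ideal_gen E X" "q \<in> ideal_gen E X"
  shows "p + q \<in> ideal_gen E X"
proof -
  obtain F c where p: "p = (\<Sum>g\<in>F. c g * g)" "finite F" "F \<subseteq> X" "\<forall>g\<in>F. c g \<in> poly_ring_E E"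
    using assms(1) unfolding ideal_gen_def by blast
  obtain F' c' where q: "q = (\<Sum>g\<in>F'. c' g * g)" "finite F'" "F' \<subseteq> X" "\<forall>g\<in>F'. c' g \<in> poly_ring_E E"
    using assms(2) unfolding ideal_gen_def by blast
  define d where "d g = (if g \<in> F then c g else 0) + (if g \<in> F' then c' g else 0)" for g
  have "p = (\<Sum>g\<in>F \<union> F'. (if g \<in> F then c g else 0) * g)"
    unfolding p(1) using p(2) q(2) by (intro sum.mono_neutral_cong_left) auto
  moreover have "q = (\<Sum>g\<in>F \<union> F'. (if g \<in> F' then c' g else 0) * g)"
    unfolding q(1) using p(2) q(2) by (intro sum.mono_neutral_cong_left) auto
  ultimately have "p + q = (\<Sum>g\<in>F \<union> F'. d g * g)"
    by (simp add: d_def distrib_right sum.distrib)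
  moreover have "\<forall>g\<in>F \<union> F'. d g \<in> poly_ring_E E"
    using p(4) q(4) poly_ring_E_zero by (auto simp: d_def intro: poly_ring_E_add)
  ultimately show ?thesis
    unfolding ideal_gen_def using p(2,3) q(2,3) by blast
qed

lemma ideal_gen_mult:
  assumes "r \<in> poly_ring_E E" "p \<in> ideal_gen E X"
  shows "r * p \<in> ideal_gen E X"
proof -
  obtain F c where p: "p = (\<Sum>g\<in>F. c g * g)" "finite F" "F \<subseteq> X" "\<forall>g\<in>F. c g \<in> poly_ring_E E"
    using assms(2) unfolding ideal_gen_def by blast
  have "r * p = (\<Sum>g\<in>F. (r * c g) * g)"
    unfolding p(1) by (simp add: sum_distrib_left mult.assoc)
  then show ?thesis
    unfolding ideal_gen_def using p(2-4) assms(1)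
    by (intro CollectI exI[of _ F] exI[of _ "\<lambda>g. r * c g"]) (auto intro: poly_ring_E_mult)
qed

lemma ideal_gen_uminus: "p \<in> ideal_gen E X \<Longrightarrow> - p \<in> ideal_gen E X"
  using ideal_gen_mult[of "- 1"] by (simp add: poly_ring_E_def)

lemma ideal_gen_sum:
  "finite F \<Longrightarrow> (\<And>g. g \<in> F \<Longrightarrow> f g \<in> ideal_gen E X) \<Longrightarrow> (\<Sum>g\<in>F. f g) \<in> ideal_gen E X"
  by (induction F rule: finite_induct) (auto intro: ideal_gen_zero ideal_gen_add)

lemma ideal_gen_subset:
  assumes "X \<subseteq> ideal_gen E Y"
  shows "ideal_gen E X \<subseteq> ideal_gen E Y"
proof
  fix p assume "p \<in> ideal_gen E X"
  then obtain F c where "p = (\<Sum>g\<in>F. c g * g)" "finite F" "F \<subseteq> X" "\<forall>g\<in>F. c g \<in> poly_ring_E E"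
    unfolding ideal_gen_def by blast
  with assms show "p \<in> ideal_gen E Y"
    by (auto intro!: ideal_gen_sum ideal_gen_mult)
qed

lemma phi_H_superset:
  assumes "finite S" "Poly_Mapping.keys p \<subseteq> S"
  shows "phi_H p = (\<Sum>m\<in>S. Poly_Mapping.single (xmon m) (Poly_Mapping.lookup p m))"
  unfolding phi_H_def using assms
  by (intro sum.mono_neutral_left) (simp_all add: not_in_keys_iff_lookup_eq_zero)

lemma phi_H_add: "phi_H (p + q) = phi_H p + phi_H q"
proof -
  let ?S = "Poly_Mapping.keys p \<union> Poly_Mapping.keys q"
  have "finite ?S" "Poly_Mapping.keys (p + q) \<subseteq> ?S"
    using keys_add[of p q] by auto
  then show ?thesis
    by (simp add: phi_H_superset[of ?S] lookup_add single_add sum.distrib)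
qed

lemma phi_H_zero: "phi_H 0 = 0"
  by (simp add: phi_H_def)

lemma phi_H_uminus: "phi_H (- p) = - phi_H p"
  by (simp add: phi_H_def single_uminus sum_negf)

lemma phi_H_diff: "phi_H (p - q) = phi_H p - phi_H q"
  using phi_H_add[of p "- q"] by (simp add: phi_H_uminus)

lemma phi_H_sum: "finite A \<Longrightarrow> phi_H (\<Sum>i\<in>A. f i) = (\<Sum>i\<in>A. phi_H (f i))"
  by (induction A rule: finite_induct) (simp_all add: phi_H_zero phi_H_add)

lemma phi_H_single: "phi_H (Poly_Mapping.single m c) = Poly_Mapping.single (xmon m) c"
  by (simp add: phi_H_superset[of "{m}"])

lemma phi_H_mult: "phi_H (p * q) = phi_H p * phi_H q"
proof -
  let ?P = "Poly_Mapping.keys p" and ?Q = "Poly_Mapping.keys q"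
  have "p * q = (\<Sum>m\<in>?P. \<Sum>m'\<in>?Q. Poly_Mapping.single (m + m')
                  (Poly_Mapping.lookup p m * Poly_Mapping.lookup q m'))"
    by (subst (1 2) poly_mapping_sum_single) (simp add: sum_product mult_single)
  then have "phi_H (p * q) = (\<Sum>m\<in>?P. \<Sum>m'\<in>?Q. Poly_Mapping.single (xmon m + xmon m')
                  (Poly_Mapping.lookup p m * Poly_Mapping.lookup q m'))"
    by (simp add: phi_H_sum phi_H_single xmon_add)
  also have "\<dots> = phi_H p * phi_H q"
    by (simp add: phi_H_def sum_product mult_single)
  finally show ?thesis .
qed

lemma lookup_phi_H:
  "Poly_Mapping.lookup (phi_H p) w = (\<Sum>m\<in>Poly_Mapping.keys p. Poly_Mapping.lookup p m when xmon m = w)"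
  by (simp add: phi_H_def lookup_sum lookup_single)

lemma toric_ideal_add: "p \<in> toric_ideal E \<Longrightarrow> q \<in> toric_ideal E \<Longrightarrow> p + q \<in> toric_ideal E"
  by (simp add: toric_ideal_def phi_H_add poly_ring_E_add)

lemma toric_ideal_diff: "p \<in> toric_ideal E \<Longrightarrow> q \<in> toric_ideal E \<Longrightarrow> p - q \<in> toric_ideal E"
  using toric_ideal_add[of p E "- q"] by (simp add: toric_ideal_def phi_H_uminus poly_ring_E_uminus)

lemma toric_ideal_sum:
  "finite F \<Longrightarrow> (\<And>g. g \<in> F \<Longrightarrow> f g \<in> toric_ideal E) \<Longrightarrow> (\<Sum>g\<in>F. f g) \<in> toric_ideal E"
  by (induction F rule: finite_induct)
     (simp_all add: toric_ideal_def phi_H_zero phi_H_add poly_ring_E_zero poly_ring_E_add)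

lemma toric_ideal_mult: "r \<in> poly_ring_E E \<Longrightarrow> p \<in> toric_ideal E \<Longrightarrow> r * p \<in> toric_ideal E"
  by (simp add: toric_ideal_def phi_H_mult poly_ring_E_mult)

lemma ideal_gen_subset_toric_ideal:
  assumes "X \<subseteq> toric_ideal E"
  shows "ideal_gen E X \<subseteq> toric_ideal E"
proof
  fix p assume "p \<in> ideal_gen E X"
  then obtain F c where "p = (\<Sum>g\<in>F. c g * g)" "finite F" "F \<subseteq> X" "\<forall>g\<in>F. c g \<in> poly_ring_E E"
    unfolding ideal_gen_def by blast
  with assms show "p \<in> toric_ideal E"
    by (auto intro!: toric_ideal_sum toric_ideal_mult)
qed

lemma uminus_binom: "- binom u v = binom v u"
  by (simp add: binom_def)

lemma phi_H_binom: "phi_H (binom u v) = Poly_Mapping.single (xmon u) 1 - Poly_Mapping.single (xmon v) 1"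
  by (simp add: binom_def phi_H_diff phi_H_single)

lemma binom_in_toric_ideal:
  assumes "Poly_Mapping.keys u \<subseteq> E" "Poly_Mapping.keys v \<subseteq> E" "xmon u = xmon v"
  shows "binom u v \<in> toric_ideal E"
  using assms unfolding toric_ideal_def
  by (simp add: phi_H_binom) (simp add: binom_def poly_ring_E_diff poly_ring_E_single)

definition same_fiber :: "nat set set \<Rightarrow> tmono \<Rightarrow> tmono \<Rightarrow> bool" where
  "same_fiber E u v \<longleftrightarrow> Poly_Mapping.keys u \<subseteq> E \<and> Poly_Mapping.keys v \<subseteq> E \<and> xmon u = xmon v"

lemma binom_in_toric_ideal_iff:
  assumes "u \<noteq> v"
  shows "(binom u v :: 'k::field tpoly) \<in> toric_ideal E \<longleftrightarrow> same_fiber E u v"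
proof
  assume I: "(binom u v :: 'k tpoly) \<in> toric_ideal E"
  have "Poly_Mapping.lookup (binom u v :: 'k tpoly) u = 1" "Poly_Mapping.lookup (binom u v :: 'k tpoly) v = - 1"
    using assms by (simp_all add: binom_def lookup_minus lookup_single)
  then have "{u, v} \<subseteq> Poly_Mapping.keys (binom u v :: 'k tpoly)"
    by (simp add: in_keys_iff)
  with I have "Poly_Mapping.keys u \<subseteq> E" "Poly_Mapping.keys v \<subseteq> E"
    unfolding toric_ideal_def poly_ring_E_def by blast+
  moreover have "Poly_Mapping.lookup (phi_H (binom u v :: 'k tpoly)) (xmon u) = 0"
    using I by (simp add: toric_ideal_def)
  then have "xmon u = xmon v"
    by (simp add: phi_H_binom lookup_minus lookup_single when_def split: if_splits)
  ultimately show "same_fiber E u v"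
    by (simp add: same_fiber_def)
qed (simp add: same_fiber_def binom_in_toric_ideal)

lemma same_fiber_mdvd:
  "same_fiber E a b \<Longrightarrow> mdvd a' a \<Longrightarrow> mdvd b' b \<Longrightarrow> same_fiber E a' b' \<longleftrightarrow> xmon a' = xmon b'"
  unfolding same_fiber_def using mdvd_keys by blast

text \<open>Membership of a binomial in I_H does not depend on the field, so primitivity is a
  condition on the exponent vectors alone.\<close>

lemma primitive_iff:
  "primitive TYPE('k::field) E a b \<longleftrightarrow> a \<noteq> b \<and> same_fiber E a b \<and>
    (\<forall>a' b'. mdvd a' a \<longrightarrow> mdvd b' b \<longrightarrow> xmon a' = xmon b' \<longrightarrow> a' = b' \<or> a' = a \<and> b' = b)"
    (is "?P \<longleftrightarrow> _ \<and> _ \<and> ?min")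
proof (cases "a = b")
  case False
  show ?thesis
  proof
    assume ?P
    then have ab: "same_fiber E a b" and none: "\<not> (\<exists>u' v'. u' \<noteq> v' \<and> (u', v') \<noteq> (a, b) \<and>
        (binom u' v' :: 'k tpoly) \<in> toric_ideal E \<and> mdvd u' a \<and> mdvd v' b)"
      unfolding primitive_def binom_in_toric_ideal_iff[OF False] by blast+
    have ?min
    proof (intro allI impI)
      fix a' b' assume a'b': "mdvd a' a" "mdvd b' b" "xmon a' = xmon b'"
      show "a' = b' \<or> a' = a \<and> b' = b"
      proof (rule ccontr)
        assume "\<not> (a' = b' \<or> a' = a \<and> b' = b)"
        then have "a' \<noteq> b'" "(a', b') \<noteq> (a, b)" by auto
        moreover have "(binom a' b' :: 'k tpoly) \<in> toric_ideal E"
          using \<open>a' \<noteq> b'\<close> binom_in_toric_ideal_iff same_fiber_mdvd[OF ab] a'b' by blast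
        ultimately show False
          using none a'b' by blast
      qed
    qed
    with False ab show "a \<noteq> b \<and> same_fiber E a b \<and> ?min" by blast
  next
    assume R: "a \<noteq> b \<and> same_fiber E a b \<and> ?min"
    show ?P
      unfolding primitive_def
    proof (intro conjI)
      show "a \<noteq> b" "(binom a b :: 'k tpoly) \<in> toric_ideal E"
        using R binom_in_toric_ideal_iff[OF False] by blast+
      show "\<not> (\<exists>u' v'. u' \<noteq> v' \<and> (u', v') \<noteq> (a, b) \<and>
        (binom u' v' :: 'k tpoly) \<in> toric_ideal E \<and> mdvd u' a \<and> mdvd v' b)"
      proof
        assume "\<exists>u' v'. u' \<noteq> v' \<and> (u', v') \<noteq> (a, b) \<and>
          (binom u' v' :: 'k tpoly) \<in> toric_ideal E \<and> mdvd u' a \<and> mdvd v' b"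
        then obtain u' v' where "u' \<noteq> v'" "(u', v') \<noteq> (a, b)" "(binom u' v' :: 'k tpoly) \<in> toric_ideal E"
          "mdvd u' a" "mdvd v' b"
          by blast
        then have "xmon u' = xmon v'"
          using binom_in_toric_ideal_iff same_fiber_def by blast
        with R \<open>u' \<noteq> v'\<close> \<open>(u', v') \<noteq> (a, b)\<close> \<open>mdvd u' a\<close> \<open>mdvd v' b\<close> show False
          by blast
      qed
    qed
  qed
qed (simp add: primitive_def)

lemma primitive_swap:
  assumes "primitive TYPE('k::field) E a b"
  shows "primitive TYPE('k) E b a"
  unfolding primitive_iff
proof (intro conjI allI impI)
  show "b \<noteq> a" "same_fiber E b a"
    using assms unfolding primitive_iff same_fiber_def by auto
  fix b' a' assume "mdvd b' b" "mdvd a' a" "xmon b' = xmon a'"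
  then show "b' = a' \<or> b' = b \<and> a' = a"
    using assms unfolding primitive_iff by force
qed

lemma primitive_minimal:
  assumes "primitive TYPE('k::field) E a b" "mdvd a' a" "mdvd b' b" "xmon a' = xmon b'"
  shows "a' = b' \<or> a' = a \<and> b' = b"
  using assms unfolding primitive_iff by blast

lemma xmon_diff_common:
  assumes "mdvd k x" "mdvd k y" "xmon x = xmon y"
  shows "xmon (x - k) = xmon (y - k)"
proof -
  have "xmon (x - k) + xmon k = xmon (y - k) + xmon k"
    using assms(3) unfolding xmon_add[symmetric] diff_add_mdvd[OF assms(1)] diff_add_mdvd[OF assms(2)] .
  then show ?thesis
    by simp
qed

lemma diff_eq_self_mdvd:
  assumes "mdvd k a" "a - k = a"
  shows "k = 0"
  using diff_add_mdvd[OF assms(1)] assms(2) by simp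

lemma primitive_coprime:
  assumes p: "primitive TYPE('k::field) E a b"
  shows "Poly_Mapping.lookup a e = 0 \<or> Poly_Mapping.lookup b e = 0"
proof -
  let ?k = "mgcd a b"
  have "xmon a = xmon b"
    using p by (simp add: primitive_iff same_fiber_def)
  then have "xmon (a - ?k) = xmon (b - ?k)"
    using mgcd_mdvd by (rule xmon_diff_common[rotated 2])
  then have "a - ?k = b - ?k \<or> a - ?k = a"
    using primitive_minimal[OF p mdvd_diff_left mdvd_diff_left] by blast
  moreover have "a - ?k \<noteq> b - ?k"
  proof
    assume "a - ?k = b - ?k"
    then have "a = b"
      using diff_add_mdvd[OF mgcd_mdvd(1)] diff_add_mdvd[OF mgcd_mdvd(2)] by metis
    with p show False
      by (simp add: primitive_iff)
  qed
  ultimately have "?k = 0"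
    using diff_eq_self_mdvd[OF mgcd_mdvd(1)] by blast
  then have "min (Poly_Mapping.lookup a e) (Poly_Mapping.lookup b e) = 0"
    by (metis lookup_mgcd lookup_zero)
  then show ?thesis
    by linarith
qed

lemma primitive_fiber_bounded:
  assumes p: "primitive TYPE('k::field) E a b" and "xmon m = xmon a"
    and bound: "\<And>e. Poly_Mapping.lookup m e \<le> Poly_Mapping.lookup a e + Poly_Mapping.lookup b e"
  shows "m = a \<or> m = b"
proof -
  let ?k = "mgcd a m"
  have "xmon (a - ?k) = xmon (m - ?k)"
    using mgcd_mdvd assms(2) by (intro xmon_diff_common) simp_all
  moreover have "mdvd (m - ?k) b"
    unfolding mdvd_def lookup_minus lookup_mgcd
  proof
    fix e
    show "Poly_Mapping.lookup m e - min (Poly_Mapping.lookup a e) (Poly_Mapping.lookup m e)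
        \<le> Poly_Mapping.lookup b e"
      using bound[of e] by (simp add: min_def) arith
  qed
  ultimately have "a - ?k = m - ?k \<or> a - ?k = a \<and> m - ?k = b"
    using primitive_minimal[OF p mdvd_diff_left] by blast
  then show ?thesis
  proof
    assume "a - ?k = m - ?k"
    then show ?thesis
      using diff_add_mdvd[OF mgcd_mdvd(1)] diff_add_mdvd[OF mgcd_mdvd(2)] by metis
  next
    assume "a - ?k = a \<and> m - ?k = b"
    moreover from this have "?k = 0"
      using diff_eq_self_mdvd[OF mgcd_mdvd(1)] by blast
    ultimately show ?thesis
      by simp
  qed
qed

subsection \<open>The Graver basis generates the toric ideal\<close>

lemma binom_add_split:
  "(binom (a + u') (b + v') :: 'k::field tpoly) =
    Poly_Mapping.single a 1 * binom u' v' + Poly_Mapping.single v' 1 * binom a b"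
  unfolding binom_def by (simp add: right_diff_distrib mult_single add.commute)

lemma binom_in_ideal_gen_graver_basis:
  "(binom u v :: 'k::field tpoly) \<in> toric_ideal E \<Longrightarrow> binom u v \<in> ideal_gen E (graver_basis E :: 'k tpoly set)"
proof (induction "mdeg u + mdeg v" arbitrary: u v rule: less_induct)
  case less
  show ?case
  proof (cases "primitive TYPE('k) E u v")
    case True
    then show ?thesis
      by (auto simp: graver_basis_def intro: ideal_gen_base)
  next
    case not_primitive: False
    show ?thesis
    proof (cases "u = v")
      case True
      then show ?thesis
        by (simp add: binom_def ideal_gen_zero)
    next
      case False
      obtain u' v' where below: "u' \<noteq> v'" "(u', v') \<noteq> (u, v)" "(binom u' v' :: 'k tpoly) \<in> toric_ideal E"
        "mdvd u' u" "mdvd v' v"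
        using not_primitive less.prems False unfolding primitive_def by blast
      define a b where "a = u - u'" and "b = v - v'"
      have u: "u = a + u'" and v: "v = b + v'"
        using diff_add_mdvd below(4,5) unfolding a_def b_def by simp_all
      have fiber: "same_fiber E u v" "same_fiber E u' v'"
        using binom_in_toric_ideal_iff less.prems False below(1,3) by blast+
      then have keys: "Poly_Mapping.keys a \<subseteq> E" "Poly_Mapping.keys b \<subseteq> E" "Poly_Mapping.keys v' \<subseteq> E"
        unfolding same_fiber_def a_def b_def using mdvd_keys[OF mdvd_diff_left] by blast+
      have "xmon a = xmon b"
        using fiber unfolding same_fiber_def u v xmon_add by simp
      with keys have ab: "(binom a b :: 'k tpoly) \<in> toric_ideal E"
        by (simp add: binom_in_toric_ideal)
      have "(a, b) \<noteq> (u, v)"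
        using below(1) unfolding u v by auto
      then have "(binom a b :: 'k tpoly) \<in> ideal_gen E (graver_basis E)"
        using less.hyps[OF mdeg_add_less ab] unfolding a_def b_def by (simp add: mdvd_diff_left)
      moreover have "(binom u' v' :: 'k tpoly) \<in> ideal_gen E (graver_basis E)"
        using less.hyps[OF mdeg_add_less[OF below(4,5,2)] below(3)] .
      ultimately show ?thesis
        unfolding u v binom_add_split using keys by (simp add: ideal_gen_add ideal_gen_mult poly_ring_E_single)
    qed
  qed
qed

lemma toric_ideal_fiber_partner:
  assumes "p \<in> toric_ideal E" "m \<in> Poly_Mapping.keys p"
  shows "\<exists>m'\<in>Poly_Mapping.keys p. m' \<noteq> m \<and> xmon m' = xmon m"
proof (rule ccontr)
  assume "\<not> ?thesis"
  then have "(\<Sum>m'\<in>Poly_Mapping.keys p. Poly_Mapping.lookup p m' when xmon m' = xmon m)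
      = (\<Sum>m'\<in>Poly_Mapping.keys p. Poly_Mapping.lookup p m' when m' = m)"
    by (intro sum.cong) (auto simp: when_def)
  also have "\<dots> = Poly_Mapping.lookup p m"
    using assms(2) by (simp add: when_def)
  finally have "Poly_Mapping.lookup (phi_H p) (xmon m) = Poly_Mapping.lookup p m"
    by (simp add: lookup_phi_H)
  with assms show False
    by (simp add: toric_ideal_def in_keys_iff)
qed

lemma keys_cancel_term:
  assumes "m' \<in> Poly_Mapping.keys p" "m' \<noteq> m"
  shows "Poly_Mapping.keys (p - Poly_Mapping.single 0 (Poly_Mapping.lookup p m) * binom m m')
    \<subseteq> Poly_Mapping.keys p - {m}"
proof
  let ?c = "Poly_Mapping.lookup p m"
  fix k assume "k \<in> Poly_Mapping.keys (p - Poly_Mapping.single 0 ?c * binom m m')"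
  then have "Poly_Mapping.lookup p k \<noteq> (?c when m = k) - (?c when m' = k)"
    by (simp add: in_keys_iff lookup_minus binom_def right_diff_distrib mult_single lookup_single)
  with assms show "k \<in> Poly_Mapping.keys p - {m}"
    by (cases "k = m"; cases "k = m'") (simp_all add: in_keys_iff)
qed

lemma toric_ideal_subset_ideal_gen_graver_basis:
  "p \<in> toric_ideal E \<Longrightarrow> (p :: 'k::field tpoly) \<in> ideal_gen E (graver_basis E)"
proof (induction "card (Poly_Mapping.keys p)" arbitrary: p rule: less_induct)
  case less
  show ?case
  proof (cases "p = 0")
    case True
    then show ?thesis
      by (simp add: ideal_gen_zero)
  next
    case False
    then obtain m where m: "m \<in> Poly_Mapping.keys p"
      by fastforce
    then obtain m' where m': "m' \<in> Poly_Mapping.keys p" "m' \<noteq> m" "xmon m' = xmon m"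
      using toric_ideal_fiber_partner[OF less.prems] by blast
    have keys: "Poly_Mapping.keys m \<subseteq> E" "Poly_Mapping.keys m' \<subseteq> E"
      using less.prems m m'(1) by (auto simp: toric_ideal_def poly_ring_E_def)
    define c where "c = Poly_Mapping.lookup p m"
    define q where "q = Poly_Mapping.single 0 c * (binom m m' :: 'k tpoly)"
    have ring: "Poly_Mapping.single 0 c \<in> poly_ring_E E"
      by (simp add: poly_ring_E_single)
    have binom: "(binom m m' :: 'k tpoly) \<in> toric_ideal E"
      using keys m'(3) by (simp add: binom_in_toric_ideal)
    have "Poly_Mapping.keys (p - q) \<subseteq> Poly_Mapping.keys p - {m}"
      unfolding q_def c_def using m'(1,2) by (rule keys_cancel_term)
    with m have "Poly_Mapping.keys (p - q) \<subset> Poly_Mapping.keys p"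
      by blast
    then have "card (Poly_Mapping.keys (p - q)) < card (Poly_Mapping.keys p)"
      by (rule psubset_card_mono[OF finite_keys])
    moreover have "p - q \<in> toric_ideal E"
      unfolding q_def by (intro toric_ideal_diff less.prems toric_ideal_mult ring binom)
    ultimately have "p - q \<in> ideal_gen E (graver_basis E)"
      by (rule less.hyps)
    moreover have "q \<in> ideal_gen E (graver_basis E)"
      unfolding q_def by (intro ideal_gen_mult ring binom_in_ideal_gen_graver_basis binom)
    ultimately show ?thesis
      using ideal_gen_add by fastforce
  qed
qed

lemma ideal_gen_graver_basis: "ideal_gen E (graver_basis E :: 'k::field tpoly set) = toric_ideal E"
proof
  have "graver_basis E \<subseteq> (toric_ideal E :: 'k tpoly set)"
    by (auto simp: graver_basis_def primitive_def)
  then show "ideal_gen E (graver_basis E) \<subseteq> (toric_ideal E :: 'k tpoly set)"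
    by (rule ideal_gen_subset_toric_ideal)
qed (use toric_ideal_subset_ideal_gen_graver_basis in blast)

lemma uminus_graver_basis: "uminus ` graver_basis E = (graver_basis E :: 'k::field tpoly set)"
proof -
  have neg: "- g \<in> graver_basis E" if g: "g \<in> (graver_basis E :: 'k tpoly set)" for g
  proof -
    obtain u v where "g = binom u v" "primitive TYPE('k) E u v"
      using g unfolding graver_basis_def by blast
    then have "- g = binom v u" "primitive TYPE('k) E v u"
      by (simp_all add: uminus_binom primitive_swap)
    then show ?thesis
      unfolding graver_basis_def by blast
  qed
  show ?thesis
  proof
    show "uminus ` graver_basis E \<subseteq> (graver_basis E :: 'k tpoly set)"
      using neg by blast
    show "graver_basis E \<subseteq> uminus ` (graver_basis E :: 'k tpoly set)"
    proof
      fix g assume "g \<in> (graver_basis E :: 'k tpoly set)"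
      then show "g \<in> uminus ` graver_basis E"
        using neg by (intro image_eqI[of g uminus "- g"]) simp_all
    qed
  qed
qed

subsection \<open>Primitive binomials with a two-element fiber are indispensable\<close>

lemma primitive_fiber_shift:
  assumes p: "primitive TYPE('k::field) E a b"
    and fiber: "\<And>m. same_fiber E m a \<Longrightarrow> m = a \<or> m = b"
    and w: "same_fiber E w w'" "w \<noteq> w'" and a: "a = m' + w"
  shows "w = a \<and> w' = b"
proof -
  have "mdvd m' a"
    unfolding a by (rule mdvd_add_right)
  moreover have ka: "Poly_Mapping.keys a \<subseteq> E"
    using p unfolding primitive_iff same_fiber_def by blast
  ultimately have "Poly_Mapping.keys (m' + w') \<subseteq> E"
    using mdvd_keys keys_add[of m' w'] w(1) unfolding same_fiber_def by blast
  moreover have "xmon (m' + w') = xmon a"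
    using w(1) by (simp add: a xmon_add same_fiber_def)
  ultimately have "same_fiber E (m' + w') a"
    using ka by (simp add: same_fiber_def)
  then have "m' + w' = a \<or> m' + w' = b"
    by (rule fiber)
  then show ?thesis
  proof
    assume "m' + w' = a"
    with a w(2) show ?thesis
      by simp
  next
    assume b: "m' + w' = b"
    have "m' = 0"
    proof (rule poly_mapping_eqI)
      fix e
      have "Poly_Mapping.lookup m' e \<le> Poly_Mapping.lookup a e"
        "Poly_Mapping.lookup m' e \<le> Poly_Mapping.lookup b e"
        unfolding a b[symmetric] by (simp_all add: lookup_add)
      then show "Poly_Mapping.lookup m' e = Poly_Mapping.lookup 0 e"
        using primitive_coprime[OF p, of e] by auto
    qed
    with a b show ?thesis
      by simp
  qed
qed

lemma lookup_mult_binom_eq_zero: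
  fixes c :: "'k::field tpoly"
  assumes p: "primitive TYPE('k) E a b"
    and fiber: "\<And>m. same_fiber E m a \<Longrightarrow> m = a \<or> m = b"
    and I: "(binom u v :: 'k tpoly) \<in> toric_ideal E" and "(u, v) \<noteq> (a, b)" "(u, v) \<noteq> (b, a)"
  shows "Poly_Mapping.lookup (c * binom u v) a = 0"
proof (cases "u = v")
  case True
  then show ?thesis
    by (simp add: binom_def)
next
  case False
  have zero: "Poly_Mapping.lookup (c * Poly_Mapping.single w (1::'k)) a = 0"
    if "same_fiber E w w'" "w \<noteq> w'" "(w, w') \<noteq> (a, b)" for w w'
  proof (rule ccontr)
    assume "Poly_Mapping.lookup (c * Poly_Mapping.single w (1::'k)) a \<noteq> 0"
    then have "a \<in> Poly_Mapping.keys (c * Poly_Mapping.single w (1::'k))"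
      by (simp add: in_keys_iff)
    then have "a \<in> (\<lambda>m. m + w) ` Poly_Mapping.keys c"
      using keys_mult_single by blast
    then obtain m' where "a = m' + w"
      by blast
    from primitive_fiber_shift[OF p fiber that(1,2) this] that(3) show False
      by simp
  qed
  have "same_fiber E u v" "same_fiber E v u"
    using binom_in_toric_ideal_iff[OF False] I by (auto simp: same_fiber_def)
  then have "Poly_Mapping.lookup (c * Poly_Mapping.single u 1) a = 0"
    "Poly_Mapping.lookup (c * Poly_Mapping.single v 1) a = 0"
    using False assms(4,5) by (auto intro!: zero)
  then show ?thesis
    by (simp add: binom_def right_diff_distrib lookup_minus)
qed

lemma primitive_not_in_ideal_gen:
  assumes p: "primitive TYPE('k::field) E a b"
    and fiber: "\<And>m. same_fiber E m a \<Longrightarrow> m = a \<or> m = b"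
    and X: "X \<subseteq> toric_ideal E" "\<forall>x\<in>X. is_binomial x" "binom a b \<notin> X" "binom b a \<notin> X"
  shows "(binom a b :: 'k tpoly) \<notin> ideal_gen E X"
proof
  assume "binom a b \<in> ideal_gen E X"
  then obtain F c where F: "binom a b = (\<Sum>g\<in>F. c g * g)" "F \<subseteq> X"
    unfolding ideal_gen_def by blast
  have "Poly_Mapping.lookup (\<Sum>g\<in>F. c g * g) a = 0"
    unfolding lookup_sum
  proof (rule sum.neutral, rule ballI)
    fix g assume "g \<in> F"
    with F(2) have g: "g \<in> X"
      by blast
    then obtain u v where uv: "g = binom u v"
      using X(2) unfolding is_binomial_def by blast
    have uv_hyps: "(binom u v :: 'k tpoly) \<in> toric_ideal E" "(u, v) \<noteq> (a, b)" "(u, v) \<noteq> (b, a)"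
      using g X(1,3,4) unfolding uv by auto
    show "Poly_Mapping.lookup (c g * g) a = 0"
      unfolding uv by (rule lookup_mult_binom_eq_zero[OF p fiber uv_hyps])
  qed
  moreover have "a \<noteq> b"
    using p by (simp add: primitive_iff)
  then have "Poly_Mapping.lookup (binom a b :: 'k tpoly) a = 1"
    by (simp add: binom_def lookup_minus lookup_single)
  ultimately show False
    using F(1) by simp
qed

subsection \<open>Two-regular hypergraphs\<close>

locale two_regular_hypergraph =
  fixes n :: nat and E :: "nat set set"
  assumes hypergraph: "hypergraph n E" and two_regular: "two_regular n E"
begin

lemma edge_subset: "e \<in> E \<Longrightarrow> e \<subseteq> {1..n}"
  using hypergraph unfolding hypergraph_def by blast

lemma finite_edges: "finite E"
proof -
  have "E \<subseteq> Pow {1..n}"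
    using edge_subset by blast
  then show ?thesis
    by (rule finite_subset) simp
qed

lemma finite_edge: "e \<in> E \<Longrightarrow> finite e"
  using edge_subset finite_subset by blast

definition star :: "nat \<Rightarrow> nat set set" where
  "star j = {e \<in> E. j \<in> e}"

lemma vertex_star: "star j = {} \<or> (\<exists>e f. e \<noteq> f \<and> star j = {e, f})"
proof (cases "j \<in> {1..n}")
  case True
  with two_regular have "card (star j) = 2"
    unfolding two_regular_def star_def by (rule bspec)
  then obtain e f where "star j = {e, f}" "e \<noteq> f"
    unfolding card_2_iff by blast
  then show ?thesis
    by blast
next
  case False
  have "j \<notin> e" if "e \<in> E" for e
    using False edge_subset[OF that] by blast
  then have "star j = {}"
    by (simp add: star_def)
  then show ?thesis ..
qed

lemma edge_star:
  assumes "e \<in> E"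
  shows "\<exists>f j. e \<noteq> f \<and> star j = {e, f}"
proof -
  have "e \<noteq> {}"
    using hypergraph assms unfolding hypergraph_def by simp
  then obtain j where "j \<in> e"
    by blast
  with assms have e: "e \<in> star j"
    by (simp add: star_def)
  then have "star j \<noteq> {}"
    by blast
  with vertex_star[of j] obtain e1 e2 where ne: "e1 \<noteq> e2" and star: "star j = {e1, e2}"
    by (elim disjE exE conjE) simp_all
  from e have "e = e1 \<or> e = e2"
    unfolding star by simp
  then show ?thesis
  proof
    assume "e = e1"
    with ne star show ?thesis
      by blast
  next
    assume "e = e2"
    with ne star show ?thesis
      by (intro exI[of _ e1] exI[of _ j]) (simp add: insert_commute)
  qed
qed

lemma lookup_xmon_star:
  "Poly_Mapping.keys x \<subseteq> E \<Longrightarrow> Poly_Mapping.lookup (xmon x) j = (\<Sum>e\<in>star j. Poly_Mapping.lookup x e)"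
  unfolding star_def using finite_edge by (intro lookup_xmon[OF finite_edges]) auto

lemma same_fiber_star:
  assumes "same_fiber E x y" "e \<noteq> f" "star j = {e, f}"
  shows "Poly_Mapping.lookup x e + Poly_Mapping.lookup x f = Poly_Mapping.lookup y e + Poly_Mapping.lookup y f"
proof -
  have "Poly_Mapping.keys x \<subseteq> E" "Poly_Mapping.keys y \<subseteq> E"
    "Poly_Mapping.lookup (xmon x) j = Poly_Mapping.lookup (xmon y) j"
    using assms(1) by (simp_all add: same_fiber_def)
  with assms(2,3) show ?thesis
    by (simp add: lookup_xmon_star)
qed

lemma xmon_eqI:
  assumes "Poly_Mapping.keys x \<subseteq> E" "Poly_Mapping.keys y \<subseteq> E"
    and "\<And>j e f. e \<noteq> f \<Longrightarrow> star j = {e, f} \<Longrightarrow>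
      Poly_Mapping.lookup x e + Poly_Mapping.lookup x f = Poly_Mapping.lookup y e + Poly_Mapping.lookup y f"
  shows "xmon x = xmon y"
proof (rule poly_mapping_eqI)
  fix j
  from vertex_star[of j] show "Poly_Mapping.lookup (xmon x) j = Poly_Mapping.lookup (xmon y) j"
    by (elim disjE exE conjE) (simp_all add: lookup_xmon_star assms)
qed

lemma primitive_squarefree:
  assumes p: "primitive TYPE('k::field) E a b"
  shows "Poly_Mapping.lookup a e \<le> 1 \<and> Poly_Mapping.lookup b e \<le> 1"
proof -
  have ab: "same_fiber E a b" "a \<noteq> b"
    using p by (simp_all add: primitive_iff)
  have "xmon (mrad a) = xmon (mrad b)"
  proof (rule xmon_eqI)
    show "Poly_Mapping.keys (mrad a) \<subseteq> E" "Poly_Mapping.keys (mrad b) \<subseteq> E"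
      using ab(1) mdvd_keys[OF mrad_mdvd[of a]] mdvd_keys[OF mrad_mdvd[of b]]
      unfolding same_fiber_def by blast+
    fix j e f assume "e \<noteq> f" "star j = {e, f}"
    with ab(1) have "Poly_Mapping.lookup a e + Poly_Mapping.lookup a f = Poly_Mapping.lookup b e + Poly_Mapping.lookup b f"
      by (rule same_fiber_star)
    with primitive_coprime[OF p, of e] primitive_coprime[OF p, of f]
    show "Poly_Mapping.lookup (mrad a) e + Poly_Mapping.lookup (mrad a) f =
        Poly_Mapping.lookup (mrad b) e + Poly_Mapping.lookup (mrad b) f"
      unfolding lookup_mrad by (auto simp: min_def)
  qed
  moreover have "mrad a \<noteq> mrad b"
  proof
    assume eq: "mrad a = mrad b"
    have "a = b"
    proof (rule poly_mapping_eqI)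
      fix e
      have "min 1 (Poly_Mapping.lookup a e) = min 1 (Poly_Mapping.lookup b e)"
        using arg_cong[OF eq, of "\<lambda>x. Poly_Mapping.lookup x e"] by (simp add: lookup_mrad)
      with primitive_coprime[OF p, of e] show "Poly_Mapping.lookup a e = Poly_Mapping.lookup b e"
        by (auto simp: min_def split: if_splits)
    qed
    with ab(2) show False ..
  qed
  ultimately have "mrad a = a" "mrad b = b"
    using primitive_minimal[OF p mrad_mdvd mrad_mdvd] by blast+
  then show ?thesis
    using lookup_mrad[of a e] lookup_mrad[of b e] by (metis min.cobounded1)
qed

lemma primitive_fiber:
  assumes p: "primitive TYPE('k::field) E a b" and m: "same_fiber E m a"
  shows "m = a \<or> m = b"
proof (rule primitive_fiber_bounded[OF p])
  show "xmon m = xmon a"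
    using m by (simp add: same_fiber_def)
  have ab: "same_fiber E a b"
    using p by (simp add: primitive_iff)
  fix e
  show "Poly_Mapping.lookup m e \<le> Poly_Mapping.lookup a e + Poly_Mapping.lookup b e"
  proof (cases "e \<in> E")
    case False
    moreover have "Poly_Mapping.keys m \<subseteq> E"
      using m by (simp add: same_fiber_def)
    ultimately have "e \<notin> Poly_Mapping.keys m"
      by blast
    then show ?thesis
      by (simp add: in_keys_iff)
  next
    case True
    from edge_star[OF True] obtain f j where ef: "e \<noteq> f" "star j = {e, f}"
      by (elim exE conjE) simp
    have "Poly_Mapping.lookup m e + Poly_Mapping.lookup m f = Poly_Mapping.lookup a e + Poly_Mapping.lookup a f"
      "Poly_Mapping.lookup a e + Poly_Mapping.lookup a f = Poly_Mapping.lookup b e + Poly_Mapping.lookup b f"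
      using same_fiber_star[OF m ef] same_fiber_star[OF ab ef] by simp_all
    with primitive_squarefree[OF p, of e] primitive_squarefree[OF p, of f]
      primitive_coprime[OF p, of e] primitive_coprime[OF p, of f]
    show ?thesis
      by linarith
  qed
qed

lemma graver_basis_indispensable:
  assumes "g \<in> (graver_basis E :: 'k::field tpoly set)" "X \<subseteq> toric_ideal E" "\<forall>x\<in>X. is_binomial x"
    "g \<notin> X" "- g \<notin> X"
  shows "g \<notin> ideal_gen E X"
proof -
  obtain a b where g: "g = binom a b" and p: "primitive TYPE('k) E a b"
    using assms(1) unfolding graver_basis_def by blast
  show ?thesis
    using primitive_not_in_ideal_gen[OF p primitive_fiber[OF p] assms(2,3)] assms(4,5)
    unfolding g uminus_binom by blast
qed

end

subsection \<open>Generating sets made of indispensable binomials\<close>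

context
  fixes G :: "'k::field tpoly set" and E :: "nat set set"
  assumes neg: "uminus ` G = G" and binomial: "\<forall>g\<in>G. is_binomial g"
    and gen: "ideal_gen E G = toric_ideal E"
    and indispensable: "\<And>g X. g \<in> G \<Longrightarrow> X \<subseteq> toric_ideal E \<Longrightarrow> \<forall>x\<in>X. is_binomial x \<Longrightarrow>
      g \<notin> X \<Longrightarrow> - g \<notin> X \<Longrightarrow> g \<notin> ideal_gen E X"
begin

lemma generators_subset_toric_ideal: "G \<subseteq> toric_ideal E"
  using gen ideal_gen_base by blast

lemma generators_uminus_closed: "g \<in> G \<Longrightarrow> - g \<in> G"
  using neg by blast

lemma ideal_gen_eq_toric_ideal_if_covers:
  assumes "X \<subseteq> toric_ideal E" "\<And>g. g \<in> G \<Longrightarrow> g \<in> X \<or> - g \<in> X"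
  shows "ideal_gen E X = toric_ideal E"
proof
  show "ideal_gen E X \<subseteq> toric_ideal E"
    using assms(1) by (rule ideal_gen_subset_toric_ideal)
  have "G \<subseteq> ideal_gen E X"
    using assms(2) ideal_gen_base ideal_gen_uminus[OF ideal_gen_base] by (metis minus_minus subsetI)
  then show "toric_ideal E \<subseteq> ideal_gen E X"
    using ideal_gen_subset gen by blast
qed

lemma minimal_gen_set_sign_choice:
  assumes "S \<union> uminus ` S = G \<union> uminus ` G" "\<forall>g\<in>S. - g \<notin> S"
  shows "minimal_gen_set E S"
  unfolding minimal_gen_set_def
proof (intro conjI ballI)
  have SG: "S \<subseteq> G"
    using assms(1) neg by blast
  then show S_toric: "S \<subseteq> toric_ideal E"
    using generators_subset_toric_ideal by blast
  then show "ideal_gen E S = toric_ideal E"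
    using assms(1) neg by (intro ideal_gen_eq_toric_ideal_if_covers) auto
  fix g assume "g \<in> S"
  then have "g \<notin> ideal_gen E (S - {g})"
    using assms(2) SG S_toric binomial by (intro indispensable) auto
  moreover have "g \<in> toric_ideal E"
    using \<open>g \<in> S\<close> S_toric by blast
  ultimately show "ideal_gen E (S - {g}) \<noteq> toric_ideal E"
    by blast
qed

lemma minimal_binomial_gen_set_signs:
  assumes B_binomial: "\<forall>b\<in>B. is_binomial b" and "minimal_gen_set E B"
  shows "B \<union> uminus ` B = G \<union> uminus ` G"
proof -
  have B_toric: "B \<subseteq> toric_ideal E" and genB: "ideal_gen E B = toric_ideal E"
    and minB: "\<forall>b\<in>B. ideal_gen E (B - {b}) \<noteq> toric_ideal E"
    using assms(2) unfolding minimal_gen_set_def by blast+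
  have GB: "g \<in> B \<or> - g \<in> B" if "g \<in> G" for g
    using indispensable[OF that B_toric B_binomial] genB generators_subset_toric_ideal that by blast
  have BG: "B \<subseteq> G"
  proof
    fix b assume "b \<in> B"
    show "b \<in> G"
    proof (rule ccontr)
      assume "b \<notin> G"
      then have "ideal_gen E (B - {b}) = toric_ideal E"
        using B_toric GB generators_uminus_closed by (intro ideal_gen_eq_toric_ideal_if_covers) auto
      with minB \<open>b \<in> B\<close> show False
        by blast
    qed
  qed
  have "B \<union> uminus ` B = G"
  proof
    show "B \<union> uminus ` B \<subseteq> G"
      using BG neg by blast
    show "G \<subseteq> B \<union> uminus ` B"
      using GB by (metis UnI1 UnI2 image_eqI minus_minus subsetI)
  qed
  then show ?thesis
    using neg by simp
qed

lemma unique_minimal_gen_setI: "unique_minimal_gen_set E G"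
  unfolding unique_minimal_gen_set_def
proof (intro conjI allI impI)
  fix S assume "S \<union> uminus ` S = G \<union> uminus ` G \<and> (\<forall>g\<in>S. - g \<notin> S)"
  then show "minimal_gen_set E S"
    using minimal_gen_set_sign_choice by blast
next
  fix B :: "'k tpoly set" assume "(\<forall>b\<in>B. is_binomial b) \<and> minimal_gen_set E B"
  then show "B \<union> uminus ` B = G \<union> uminus ` G"
    using minimal_binomial_gen_set_signs by blast
qed (rule gen)

end

theorem proposition4p2:
  fixes n :: nat and E :: "nat set set"
  assumes "hypergraph n E" and "uniform_hg E" and "two_regular n E"
  shows "unique_minimal_gen_set E (graver_basis E :: ('k::field) tpoly set)"
proof -
  interpret two_regular_hypergraph n E
    using assms(1,3) by unfold_locales
  have binomial: "\<forall>g\<in>graver_basis E. is_binomial (g :: 'k tpoly)"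
    by (auto simp: graver_basis_def is_binomial_def)
  show ?thesis
    by (rule unique_minimal_gen_setI[OF uminus_graver_basis binomial ideal_gen_graver_basis
          graver_basis_indispensable])
qed

end
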